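(* Consider the setting described in the context, fix $\varepsilon_{\mathrm{req}}\in[\varepsilon_{\min},+\infty)$, and let $(\boldsymbol{K}^*,\boldsymbol{B}^* )$ be an optimal social state, i.e., a maximizer of $W_{\mathrm{MoTS}}(\boldsymbol{K},\boldsymbol{B})$ over social states with $\sum_iK_i\ge1$ and $\varepsilon(\boldsymbol{K})\le\varepsilon_{\mathrm{req}}$. Then $W_{\mathrm{MoTS}}(\boldsymbol{K}^*,\boldsymbol{B}^* )\ge W_{\mathrm{FL}}(\boldsymbol{K})$ for every participation vector $\boldsymbol{K}$ with $\varepsilon(\boldsymbol{K})=\varepsilon(\boldsymbol{K}^* )$; in particular $W_{\mathrm{MoTS}}(\boldsymbol{K}^*,\boldsymbol{B}^* )$ is at least the maximum social welfare achievable in the standard federated learning framework with model performance $\varepsilon(\boldsymbol{K}^* )$.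
   Context: There are $N$ clients partitioned into $I$ types; type $i$ has $N_i\ge1$ clients ($\sum_iN_i=N$), data size $D_i>0$ with $D_1\le\dots\le D_I$, participation cost $C_i$ with $C_1\le\dots\le C_I$; feature dimension $d\ge1$, data variance $\gamma^2>0$, client variance $\sigma^2\ge0$. A social state $(\boldsymbol{K},\boldsymbol{B})$ consists of nonnegative integers with $K_i+B_i\le N_i$ ($K_i$ type-$i$ training participants, $B_i$ type-$i$ model buyers); a participation vector $\boldsymbol{K}$ has integers $0\le K_i\le N_i$. For $K=\sum_iK_i\ge1$, $\varepsilon(\boldsymbol{K})=\frac{d\gamma^2}{K^2}\sum_i\frac{K_i}{D_i}+\frac{K-1}{K}\sigma^2$. Utility $U(\varepsilon)\ge0$ with $U'\le0$ and $(\varepsilon-\sigma^2)U''+2U'\ge0$ for $\varepsilon\ne\sigma^2$. Model-trading-and-sharing welfare: $W_{\mathrm{MoTS}}(\boldsymbol{K},\boldsymbol{B})=\sum_i[K_i(U(\varepsilon(\boldsymbol{K}))-C_i)+B_iU(\varepsilon(\boldsymbol{K}))]$. Standard federated learning welfare (only participants obtain the model): $W_{\mathrm{FL}}(\boldsymbol{K})=\sum_iK_i(U(\varepsilon(\boldsymbol{K}))-C_i)$. $\varepsilon_{\min}$ is the minimum achievable generalization error. *)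

theory Defs
  imports Complex_Main
begin

text \<open>Client types are indexed by 0,...,I-1. Vectors over types are functions nat => nat;
only their values at indices below I matter.\<close>

definition total :: "nat \<Rightarrow> (nat \<Rightarrow> nat) \<Rightarrow> nat" where
  "total I K = (\<Sum>i<I. K i)"

text \<open>Generalization error eps(K) (meaningful when total I K >= 1).\<close>
definition gen_err :: "nat \<Rightarrow> real \<Rightarrow> real \<Rightarrow> (nat \<Rightarrow> real) \<Rightarrow> nat \<Rightarrow> (nat \<Rightarrow> nat) \<Rightarrow> real" where
  "gen_err d gamma2 sigma2 D I K =
     (let k = real (total I K) in
      real d * gamma2 / k ^ 2 * (\<Sum>i<I. real (K i) / D i) + (k - 1) / k * sigma2)"

definition participation_vector :: "(nat \<Rightarrow> nat) \<Rightarrow> nat \<Rightarrow> (nat \<Rightarrow> nat) \<Rightarrow> bool" where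
  "participation_vector N I K = (\<forall>i<I. K i \<le> N i)"

definition social_state :: "(nat \<Rightarrow> nat) \<Rightarrow> nat \<Rightarrow> (nat \<Rightarrow> nat) \<Rightarrow> (nat \<Rightarrow> nat) \<Rightarrow> bool" where
  "social_state N I K B = (\<forall>i<I. K i + B i \<le> N i)"

definition eps_min :: "nat \<Rightarrow> real \<Rightarrow> real \<Rightarrow> (nat \<Rightarrow> real) \<Rightarrow> (nat \<Rightarrow> nat) \<Rightarrow> nat \<Rightarrow> real" where
  "eps_min d gamma2 sigma2 D N I =
     Min {gen_err d gamma2 sigma2 D I K | K. participation_vector N I K \<and> total I K \<ge> 1}"

definition W_MoTS :: "(real \<Rightarrow> real) \<Rightarrow> (nat \<Rightarrow> real) \<Rightarrow> nat \<Rightarrow> real \<Rightarrow> real \<Rightarrow> (nat \<Rightarrow> real) \<Rightarrow> nat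
     \<Rightarrow> (nat \<Rightarrow> nat) \<Rightarrow> (nat \<Rightarrow> nat) \<Rightarrow> real" where
  "W_MoTS U C d gamma2 sigma2 D I K B =
     (\<Sum>i<I. real (K i) * (U (gen_err d gamma2 sigma2 D I K) - C i)
            + real (B i) * U (gen_err d gamma2 sigma2 D I K))"

definition W_FL :: "(real \<Rightarrow> real) \<Rightarrow> (nat \<Rightarrow> real) \<Rightarrow> nat \<Rightarrow> real \<Rightarrow> real \<Rightarrow> (nat \<Rightarrow> real) \<Rightarrow> nat
     \<Rightarrow> (nat \<Rightarrow> nat) \<Rightarrow> real" where
  "W_FL U C d gamma2 sigma2 D I K =
     (\<Sum>i<I. real (K i) * (U (gen_err d gamma2 sigma2 D I K) - C i))"

end

theory Submission
  imports Defs
begin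

lemma W_MoTS_no_buyers:
  "W_MoTS U C d gamma2 sigma2 D I K (\<lambda>_. 0) = W_FL U C d gamma2 sigma2 D I K"
  by (simp add: W_MoTS_def W_FL_def)

lemma social_state_no_buyers_iff:
  "social_state N I K (\<lambda>_. 0) \<longleftrightarrow> participation_vector N I K"
  by (simp add: social_state_def participation_vector_def)

theorem proposition3:
  fixes I d :: nat and N :: "nat \<Rightarrow> nat" and D C :: "nat \<Rightarrow> real"
    and gamma2 sigma2 eps_req :: real
    and U U' U'' :: "real \<Rightarrow> real"
    and Kopt Bopt :: "nat \<Rightarrow> nat"
  assumes I_pos: "I \<ge> 1"
    and N_pos: "\<forall>i<I. N i \<ge> 1"
    and D_pos: "\<forall>i<I. D i > 0"
    and D_mono: "\<forall>i j. i \<le> j \<and> j < I \<longrightarrow> D i \<le> D j"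
    and C_mono: "\<forall>i j. i \<le> j \<and> j < I \<longrightarrow> C i \<le> C j"
    and d_pos: "d \<ge> 1"
    and gamma_pos: "gamma2 > 0"
    and sigma_nonneg: "sigma2 \<ge> 0"
    and U_nonneg: "\<forall>x>0. U x \<ge> 0"
    and U_deriv: "\<forall>x>0. (U has_real_derivative U' x) (at x)"
    and U'_deriv: "\<forall>x>0. (U' has_real_derivative U'' x) (at x)"
    and U'_nonpos: "\<forall>x>0. U' x \<le> 0"
    and U_cond: "\<forall>x>0. x \<noteq> sigma2 \<longrightarrow> (x - sigma2) * U'' x + 2 * U' x \<ge> 0"
    and eps_req: "eps_req \<ge> eps_min d gamma2 sigma2 D N I"
    and opt_state: "social_state N I Kopt Bopt"
    and opt_pos: "total I Kopt \<ge> 1"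
    and opt_req: "gen_err d gamma2 sigma2 D I Kopt \<le> eps_req"
    and opt_max: "\<forall>K B. social_state N I K B \<and> total I K \<ge> 1
                    \<and> gen_err d gamma2 sigma2 D I K \<le> eps_req
                    \<longrightarrow> W_MoTS U C d gamma2 sigma2 D I K B \<le> W_MoTS U C d gamma2 sigma2 D I Kopt Bopt"
  shows "\<forall>K. participation_vector N I K \<and> total I K \<ge> 1
              \<and> gen_err d gamma2 sigma2 D I K = gen_err d gamma2 sigma2 D I Kopt
              \<longrightarrow> W_FL U C d gamma2 sigma2 D I K \<le> W_MoTS U C d gamma2 sigma2 D I Kopt Bopt"
proof (intro allI impI)
  fix K
  assume "participation_vector N I K \<and> total I K \<ge> 1
            \<and> gen_err d gamma2 sigma2 D I K = gen_err d gamma2 sigma2 D I Kopt"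
  then have K: "participation_vector N I K" "total I K \<ge> 1"
    and K_req: "gen_err d gamma2 sigma2 D I K \<le> eps_req"
    using opt_req by auto
  txt \<open>The federated-learning outcome is the social state with participants K and no buyers,
    which is feasible for the MoTS optimisation. Only this and the optimality of (Kopt, Bopt) are
    needed.\<close>
  have "social_state N I K (\<lambda>_. 0)"
    using K(1) by (simp add: social_state_no_buyers_iff)
  with K(2) K_req opt_max
  have "W_MoTS U C d gamma2 sigma2 D I K (\<lambda>_. 0) \<le> W_MoTS U C d gamma2 sigma2 D I Kopt Bopt"
    by blast
  then show "W_FL U C d gamma2 sigma2 D I K \<le> W_MoTS U C d gamma2 sigma2 D I Kopt Bopt"
    by (simp add: W_MoTS_no_buyers)
qed

end
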